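(* Let $n\ge 4$. Each of the following representations $\varepsilon_j:UV_n(2)\to\mathrm{GL}_{n+1}(\mathbb{C})$, $1\le j\le 4$, is reducible: $\varepsilon_j(\rho_i)=\mathrm{diag}(I_{i-1},R^{(j)},I_{n-i-1})$, $\varepsilon_j(\sigma_{i,t})=\mathrm{diag}(I_{i-1},S_t^{(j)},I_{n-i-1})$ for $1\le i\le n-1$, $t\in\{1,2\}$, where (1) $R^{(1)}=\begin{pmatrix}1&0&0\\0&0&r_6\\0&\frac1{r_6}&0\end{pmatrix}$, $S_t^{(1)}=\begin{pmatrix}1&0&0\\0&s_{5,t}&s_{6,t}\\0&s_{8,t}&s_{9,t}\end{pmatrix}$, with $r_6\ne0$, $s_{5,t}s_{9,t}-s_{6,t}s_{8,t}\ne0$; (2) $R^{(2)}=\begin{pmatrix}0&r_2&0\\ \frac1{r_2}&0&0\\0&0&1\end{pmatrix}$, $S_t^{(2)}=\begin{pmatrix}s_{1,t}&s_{2,t}&0\\ s_{4,t}&s_{5,t}&0\\0&0&1\end{pmatrix}$, with $r_2\ne0$, $s_{1,t}s_{5,t}-s_{2,t}s_{4,t}\ne0$; (3) $R^{(3)}=\begin{pmatrix}1&0&0\\ \frac1{r_6}&-1&r_6\\0&0&1\end{pmatrix}$, $S_t^{(3)}=\begin{pmatrix}1&0&0\\ s_{4,t}&s_{5,t}&r_6(1-r_6s_{4,t}-s_{5,t})\\0&0&1\end{pmatrix}$, with $r_6\ne0$, $s_{5,t}\ne0$; (4) $R^{(4)}=\begin{pmatrix}1&r_2&0\\0&-1&0\\0&\frac1{r_2}&1\end{pmatrix}$,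 $S_t^{(4)}=\begin{pmatrix}1&r_2(1-s_{5,t}-r_2s_{8,t})&0\\0&s_{5,t}&0\\0&s_{8,t}&1\end{pmatrix}$, with $r_2\ne0$, $s_{5,t}\ne0$. All parameters are complex numbers.
   Context: $UV_n(c)$ is the group with generators $\rho_i$ ($1\le i\le n-1$), $\sigma_{i,t}$ ($1\le i\le n-1$, $1\le t\le c$) and relations $\rho_i\rho_{i+1}\rho_i=\rho_{i+1}\rho_i\rho_{i+1}$, $\rho_i\rho_j=\rho_j\rho_i$ ($|i-j|\ge2$), $\rho_i^2=1$, $\sigma_{i,t}\sigma_{j,\ell}=\sigma_{j,\ell}\sigma_{i,t}$ ($|i-j|\ge2$), $\sigma_{i,t}\rho_j=\rho_j\sigma_{i,t}$ ($|i-j|\ge2$), $\rho_i\rho_{i+1}\sigma_{i,t}=\sigma_{i+1,t}\rho_i\rho_{i+1}$ ($1\le i\le n-2$). The displayed assignments define representations of $UV_n(2)$. $\mathrm{diag}$ denotes a block diagonal matrix, $I_r$ the $r\times r$ identity. Reducible means there is a nonzero proper subspace of $\mathbb{C}^{n+1}$ invariant under all image matrices. *)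

theory Defs
  imports "Jordan_Normal_Form.Matrix"
begin

(* block diagonal matrix diag(I_{i-1}, M, I_{n-i-1}) of size (n+1)x(n+1), M a 3x3 matrix,
   i counted from 1 as in the paper; matrix indices are 0-based *)
definition blk :: "nat \<Rightarrow> nat \<Rightarrow> complex mat \<Rightarrow> complex mat" where
  "blk n i M = mat (n+1) (n+1) (\<lambda>(a,b).
     if i - 1 \<le> a \<and> a < i + 2 \<and> i - 1 \<le> b \<and> b < i + 2
     then M $$ (a - (i - 1), b - (i - 1))
     else if a = b then 1 else 0)"

definition gens :: "nat \<Rightarrow> complex mat \<Rightarrow> (nat \<Rightarrow> complex mat) \<Rightarrow> complex mat set" where
  "gens n R S = {blk n i R | i. 1 \<le> i \<and> i \<le> n - 1}
              \<union> {blk n i (S t) | i t. 1 \<le> i \<and> i \<le> n - 1 \<and> t \<in> {1,2}}"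

inductive_set gen_group :: "nat \<Rightarrow> complex mat set \<Rightarrow> complex mat set"
  for N :: nat and G :: "complex mat set" where
  one: "1\<^sub>m N \<in> gen_group N G"
| mult: "A \<in> gen_group N G \<Longrightarrow> g \<in> G \<Longrightarrow> g * A \<in> gen_group N G"
| inv: "A \<in> gen_group N G \<Longrightarrow> g \<in> G \<Longrightarrow> B \<in> carrier_mat N N \<Longrightarrow> B * g = 1\<^sub>m N
        \<Longrightarrow> B * A \<in> gen_group N G"

definition rep_image :: "nat \<Rightarrow> complex mat \<Rightarrow> (nat \<Rightarrow> complex mat) \<Rightarrow> complex mat set" where
  "rep_image n R S = gen_group (n+1) (gens n R S)"

definition is_subspace :: "nat \<Rightarrow> complex vec set \<Rightarrow> bool" where
  "is_subspace N W \<longleftrightarrow> W \<subseteq> carrier_vec N \<and> 0\<^sub>v N \<in> W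
     \<and> (\<forall>v\<in>W. \<forall>w\<in>W. v + w \<in> W) \<and> (\<forall>c. \<forall>v\<in>W. c \<cdot>\<^sub>v v \<in> W)"

definition reducible :: "nat \<Rightarrow> complex mat set \<Rightarrow> bool" where
  "reducible N G \<longleftrightarrow> (\<exists>W. is_subspace N W \<and> W \<noteq> {0\<^sub>v N} \<and> W \<noteq> carrier_vec N
     \<and> (\<forall>A\<in>G. \<forall>w\<in>W. A *\<^sub>v w \<in> W))"

definition R1 :: "complex \<Rightarrow> complex mat" where
  "R1 r6 = mat_of_rows_list 3 [[1,0,0],[0,0,r6],[0,1/r6,0]]"
definition S1 :: "complex \<Rightarrow> complex \<Rightarrow> complex \<Rightarrow> complex \<Rightarrow> complex mat" where
  "S1 s5 s6 s8 s9 = mat_of_rows_list 3 [[1,0,0],[0,s5,s6],[0,s8,s9]]"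
definition R2 :: "complex \<Rightarrow> complex mat" where
  "R2 r2 = mat_of_rows_list 3 [[0,r2,0],[1/r2,0,0],[0,0,1]]"
definition S2 :: "complex \<Rightarrow> complex \<Rightarrow> complex \<Rightarrow> complex \<Rightarrow> complex mat" where
  "S2 s1 s2 s4 s5 = mat_of_rows_list 3 [[s1,s2,0],[s4,s5,0],[0,0,1]]"
definition R3 :: "complex \<Rightarrow> complex mat" where
  "R3 r6 = mat_of_rows_list 3 [[1,0,0],[1/r6,-1,r6],[0,0,1]]"
definition S3 :: "complex \<Rightarrow> complex \<Rightarrow> complex \<Rightarrow> complex mat" where
  "S3 r6 s4 s5 = mat_of_rows_list 3 [[1,0,0],[s4,s5,r6*(1-r6*s4-s5)],[0,0,1]]"
definition R4 :: "complex \<Rightarrow> complex mat" where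
  "R4 r2 = mat_of_rows_list 3 [[1,r2,0],[0,-1,0],[0,1/r2,1]]"
definition S4 :: "complex \<Rightarrow> complex \<Rightarrow> complex \<Rightarrow> complex mat" where
  "S4 r2 s5 s8 = mat_of_rows_list 3 [[1,r2*(1-s5-r2*s8),0],[0,s5,0],[0,s8,1]]"

end

theory Submission
  imports Defs
begin

(* Each representation has a common fixed vector v \<noteq> 0, whose span is then a nonzero proper
   invariant subspace of C^(n+1), as n + 1 \<ge> 2: v = e_1 in cases (1) and (4), and
   v = (r^n, r^(n-1), ..., r, 1) in case (3) with r = r6 and in case (2) with r = 0,
   i.e. v = e_(n+1). A generator diag(I_(i-1), M, I_(n-i-1)) fixes v as soon as M fixes the three
   entries of v in its block, and these are always a multiple of (1, 0, 0) resp. (r^2, r, 1); so it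
   suffices that R and the S_t fix that vector. Of the hypotheses, only r6 \<noteq> 0 in case (3)
   is needed. *)

lemma gen_group_fixes_vec:
  assumes v: "v \<in> carrier_vec N"
    and G: "\<And>g. g \<in> G \<Longrightarrow> g \<in> carrier_mat N N \<and> g *\<^sub>v v = v"
    and A: "A \<in> gen_group N G"
  shows "A \<in> carrier_mat N N \<and> A *\<^sub>v v = v"
  using A
proof (induction rule: gen_group.induct)
  case one
  then show ?case using v by simp
next
  case (mult A g)
  then show ?case using G[OF mult.hyps(2)] v by auto
next
  case (inv A g B)
  have g: "g \<in> carrier_mat N N" "g *\<^sub>v v = v" using G inv.hyps(2) by auto
  have "(B * A) *\<^sub>v v = B *\<^sub>v (g *\<^sub>v v)" using inv v g by auto
  also have "\<dots> = (B * g) *\<^sub>v v" using inv.hyps(3) g v by simp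
  also have "\<dots> = v" using inv.hyps(4) v by simp
  finally show ?case using inv by auto
qed

lemma is_subspace_line:
  assumes "v \<in> carrier_vec N"
  shows "is_subspace N (range (\<lambda>c. c \<cdot>\<^sub>v v))"
  unfolding is_subspace_def
proof (intro conjI ballI allI)
  show "range (\<lambda>c. c \<cdot>\<^sub>v v) \<subseteq> carrier_vec N" using assms by auto
  have "0\<^sub>v N = 0 \<cdot>\<^sub>v v" using assms by auto
  then show "0\<^sub>v N \<in> range (\<lambda>c. c \<cdot>\<^sub>v v)" by blast
next
  fix x y assume "x \<in> range (\<lambda>c. c \<cdot>\<^sub>v v)" "y \<in> range (\<lambda>c. c \<cdot>\<^sub>v v)"
  then obtain a b where "x = a \<cdot>\<^sub>v v" "y = b \<cdot>\<^sub>v v" by auto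
  then have "x + y = (a + b) \<cdot>\<^sub>v v" by (simp add: add_smult_distrib_vec)
  then show "x + y \<in> range (\<lambda>c. c \<cdot>\<^sub>v v)" by blast
next
  fix c x assume "x \<in> range (\<lambda>c. c \<cdot>\<^sub>v v)"
  then obtain a where "x = a \<cdot>\<^sub>v v" by auto
  then have "c \<cdot>\<^sub>v x = (c * a) \<cdot>\<^sub>v v" by (simp add: smult_smult_assoc)
  then show "c \<cdot>\<^sub>v x \<in> range (\<lambda>c. c \<cdot>\<^sub>v v)" by blast
qed

lemma line_neq_carrier_vec:
  fixes v :: "'a :: field vec"
  assumes v: "v \<in> carrier_vec N" and N: "2 \<le> N"
  shows "range (\<lambda>c. c \<cdot>\<^sub>v v) \<noteq> carrier_vec N"
proof
  assume line: "range (\<lambda>c. c \<cdot>\<^sub>v v) = carrier_vec N"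
  obtain a where a: "unit_vec N 0 = a \<cdot>\<^sub>v v"
    using line N by (metis rangeE unit_vec_carrier)
  obtain b where b: "unit_vec N 1 = b \<cdot>\<^sub>v v"
    using line N by (metis rangeE unit_vec_carrier)
  have "a * v $ 0 = 1" "b * v $ 0 = 0" "b * v $ 1 = 1"
    using arg_cong[OF a, of "\<lambda>x. x $ 0"] arg_cong[OF b, of "\<lambda>x. x $ 0"]
      arg_cong[OF b, of "\<lambda>x. x $ 1"] v N by auto
  then have "b = 0" by auto
  then show False using \<open>b * v $ 1 = 1\<close> by simp
qed

lemma reducible_if_fixed_vec:
  assumes v: "v \<in> carrier_vec N" "v \<noteq> 0\<^sub>v N" and N: "2 \<le> N"
    and G: "\<And>A. A \<in> G \<Longrightarrow> A \<in> carrier_mat N N \<and> A *\<^sub>v v = v"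
  shows "reducible N G"
  unfolding reducible_def
proof (intro exI conjI)
  let ?W = "range (\<lambda>c. c \<cdot>\<^sub>v v)"
  show "is_subspace N ?W" using is_subspace_line[OF v(1)] .
  have "v \<in> ?W" by (metis one_smult_vec rangeI)
  then show "?W \<noteq> {0\<^sub>v N}" using v(2) by blast
  show "?W \<noteq> carrier_vec N" using line_neq_carrier_vec[OF v(1) N] .
  show "\<forall>A\<in>G. \<forall>w\<in>?W. A *\<^sub>v w \<in> ?W"
  proof (intro ballI)
    fix A w assume "A \<in> G" "w \<in> ?W"
    then obtain c where "w = c \<cdot>\<^sub>v v" by blast
    then have "A *\<^sub>v w = c \<cdot>\<^sub>v (A *\<^sub>v v)" using G[OF \<open>A \<in> G\<close>] v(1)
      by (metis mult_mat_vec)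
    then show "A *\<^sub>v w \<in> ?W" using G[OF \<open>A \<in> G\<close>] by simp
  qed
qed

definition blk_segment :: "nat \<Rightarrow> 'a vec \<Rightarrow> 'a vec" where
  "blk_segment i v = vec 3 (\<lambda>k. v $ (i - 1 + k))"

lemma eq_vec3I:
  assumes "dim_vec v = 3" "dim_vec w = 3" "v $ 0 = w $ 0" "v $ 1 = w $ 1" "v $ 2 = w $ 2"
  shows "v = w"
proof (rule eq_vecI)
  fix k assume "k < dim_vec w"
  then have "k = 0 \<or> k = 1 \<or> k = 2" using assms(2) by auto
  then show "v $ k = w $ k" using assms by auto
qed (use assms in simp)

lemma blk_carrier: "blk n i M \<in> carrier_mat (n+1) (n+1)"
  unfolding blk_def by simp

lemma index_blk_mult_vec:
  assumes i: "1 \<le> i" "i + 1 \<le> n" and M: "M \<in> carrier_mat 3 3"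
    and v: "v \<in> carrier_vec (n+1)" and a: "a < n+1"
  shows "(blk n i M *\<^sub>v v) $ a =
    (if i - 1 \<le> a \<and> a < i + 2 then (M *\<^sub>v blk_segment i v) $ (a - (i - 1)) else v $ a)"
proof -
  have "(blk n i M *\<^sub>v v) $ a = (\<Sum>b<n+1. blk n i M $$ (a, b) * v $ b)"
    using a v unfolding blk_def by (simp add: scalar_prod_def lessThan_atLeast0)
  also have "\<dots> =
    (if i - 1 \<le> a \<and> a < i + 2 then (M *\<^sub>v blk_segment i v) $ (a - (i - 1)) else v $ a)"
  proof (cases "i - 1 \<le> a \<and> a < i + 2")
    case True
    have "(\<Sum>b<n+1. blk n i M $$ (a, b) * v $ b) =
        (\<Sum>b\<in>{i-1..<i-1+3}. blk n i M $$ (a, b) * v $ b)"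
      using i a True by (intro sum.mono_neutral_right) (auto simp: blk_def)
    also have "\<dots> = (\<Sum>k<3. blk n i M $$ (a, i - 1 + k) * v $ (i - 1 + k))"
      using sum.atLeastLessThan_shift_0[of "\<lambda>b. blk n i M $$ (a, b) * v $ b" "i - 1" "i - 1 + 3"]
      by (simp add: lessThan_atLeast0)
    also have "\<dots> = (\<Sum>k<3. M $$ (a - (i - 1), k) * blk_segment i v $ k)"
      using i a True by (intro sum.cong) (auto simp: blk_def blk_segment_def)
    also have "\<dots> = (M *\<^sub>v blk_segment i v) $ (a - (i - 1))"
      using M True by (auto simp: blk_segment_def scalar_prod_def lessThan_atLeast0)
    finally show ?thesis using True by simp
  next
    case False
    have "(\<Sum>b<n+1. blk n i M $$ (a, b) * v $ b) = (\<Sum>b<n+1. if b = a then v $ a else 0)"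
      using i a False by (intro sum.cong) (auto simp: blk_def)
    also have "\<dots> = v $ a" using a by simp
    finally show ?thesis unfolding if_not_P[OF False] .
  qed
  finally show ?thesis .
qed

lemma blk_mult_vec_fixed:
  assumes i: "1 \<le> i" "i + 1 \<le> n" and M: "M \<in> carrier_mat 3 3"
    and v: "v \<in> carrier_vec (n+1)" and fixed: "M *\<^sub>v blk_segment i v = blk_segment i v"
  shows "blk n i M *\<^sub>v v = v"
proof (rule eq_vecI)
  show "dim_vec (blk n i M *\<^sub>v v) = dim_vec v" using v blk_carrier[of n i M] by simp
  fix a assume "a < dim_vec v"
  then have a: "a < n + 1" using v by simp
  note index = index_blk_mult_vec[OF i M v a, unfolded fixed]
  show "(blk n i M *\<^sub>v v) $ a = v $ a"
  proof (cases "i - 1 \<le> a \<and> a < i + 2")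
    case True
    then have "a - (i - 1) < 3" "i - 1 + (a - (i - 1)) = a" by auto
    then show ?thesis using index True by (simp add: blk_segment_def)
  next
    case False
    show ?thesis using index[unfolded if_not_P[OF False]] .
  qed
qed

lemma reducible_rep_image_if_fixed_vec:
  assumes n: "1 \<le> n" and v: "v \<in> carrier_vec (n+1)" "v \<noteq> 0\<^sub>v (n+1)"
    and u: "u \<in> carrier_vec 3"
    and segments: "\<And>i. 1 \<le> i \<Longrightarrow> i + 1 \<le> n \<Longrightarrow> \<exists>c. blk_segment i v = c \<cdot>\<^sub>v u"
    and R: "R \<in> carrier_mat 3 3" "R *\<^sub>v u = u"
    and S: "\<And>t. t \<in> {1,2} \<Longrightarrow> S t \<in> carrier_mat 3 3 \<and> S t *\<^sub>v u = u"
  shows "reducible (n+1) (rep_image n R S)"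
proof -
  have blk_fixes: "blk n i M *\<^sub>v v = v"
    if i: "1 \<le> i" "i \<le> n - 1" and M: "M \<in> carrier_mat 3 3" "M *\<^sub>v u = u" for i M
  proof -
    have i': "1 \<le> i" "i + 1 \<le> n" using i n by auto
    obtain c where "blk_segment i v = c \<cdot>\<^sub>v u" using segments[OF i'] by blast
    then have "M *\<^sub>v blk_segment i v = blk_segment i v" using M u by (metis mult_mat_vec)
    then show ?thesis using blk_mult_vec_fixed[OF i' M(1) v(1)] by blast
  qed
  have gens_fix: "g \<in> carrier_mat (n+1) (n+1) \<and> g *\<^sub>v v = v" if g: "g \<in> gens n R S" for g
  proof -
    consider (rho) i where "g = blk n i R" "1 \<le> i" "i \<le> n - 1"
      | (sigma) i t where "g = blk n i (S t)" "1 \<le> i" "i \<le> n - 1" "t \<in> {1,2}"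
      using g unfolding gens_def by blast
    then show ?thesis
    proof cases
      case rho
      then show ?thesis using blk_fixes R blk_carrier by simp
    next
      case sigma
      then show ?thesis using blk_fixes[of i "S t"] S[of t] blk_carrier by simp
    qed
  qed
  show ?thesis unfolding rep_image_def
  proof (rule reducible_if_fixed_vec[OF v])
    show "2 \<le> n + 1" using n by simp
    fix A assume "A \<in> gen_group (n+1) (gens n R S)"
    then show "A \<in> carrier_mat (n+1) (n+1) \<and> A *\<^sub>v v = v"
      using gen_group_fixes_vec[OF v(1) gens_fix] by blast
  qed
qed

(* Keep 3-vectors as literal lists: as vCons chains they no longer match
   mat_of_rows_list_3_mult_vec. *)
declare vec_of_list_Cons [simp del]

lemma mat_of_rows_list_3_carrier:
  "mat_of_rows_list 3 [r1, r2, r3] \<in> carrier_mat 3 3"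
  by (simp add: mat_of_rows_list_def numeral_3_eq_3)

lemma mat_of_rows_list_3_mult_vec:
  "mat_of_rows_list 3 [[a, b, c], [d, e, f], [g, h, k]] *\<^sub>v vec_of_list [x, y, z]
     = vec_of_list [a*x + b*y + c*z, d*x + e*y + f*z, g*x + h*y + k*z :: 'a :: comm_ring]"
  by (rule eq_vec3I)
    (auto simp: mat_of_rows_list_def scalar_prod_def numeral_3_eq_3 vec_of_list_index)

lemma blk_segment_first_unit_vec:
  assumes "1 \<le> i" "i + 1 \<le> n"
  shows "blk_segment i (unit_vec (n+1) 0) =
    (if i = 1 then 1 else 0 :: 'a :: comm_ring_1) \<cdot>\<^sub>v vec_of_list [1, 0, 0]"
  using assms by (intro eq_vec3I) (auto simp: blk_segment_def vec_of_list_index)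

lemma blk_segment_geometric_vec:
  fixes r :: "'a :: comm_ring_1"
  assumes "1 \<le> i" "i + 1 \<le> n"
  shows "blk_segment i (vec (n+1) (\<lambda>b. r ^ (n - b))) =
    r ^ (n - i - 1) \<cdot>\<^sub>v vec_of_list [r^2, r, 1]"
proof -
  obtain q where "n = i + 1 + q" using assms(2) le_Suc_ex by blast
  then show ?thesis
    using assms by (intro eq_vec3I)
      (auto simp: blk_segment_def power_add power2_eq_square Suc_diff_le vec_of_list_index)
qed

lemma reducible_rep_image_if_blocks_fix_first_unit_vec:
  assumes "1 \<le> n"
    and "R \<in> carrier_mat 3 3" "R *\<^sub>v vec_of_list [1, 0, 0] = vec_of_list [1, 0, 0]"
    and "\<And>t. t \<in> {1,2} \<Longrightarrow>
      S t \<in> carrier_mat 3 3 \<and> S t *\<^sub>v vec_of_list [1, 0, 0] = vec_of_list [1, 0, 0]"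
  shows "reducible (n+1) (rep_image n R S)"
proof (rule reducible_rep_image_if_fixed_vec[OF assms(1) _ _ _ _ assms(2-4)])
  show "unit_vec (n+1) 0 \<in> carrier_vec (n+1)" by (rule unit_vec_carrier)
  show "unit_vec (n+1) 0 \<noteq> 0\<^sub>v (n+1)" by (rule unit_vec_nonzero) simp
  show "vec_of_list [1, 0, 0] \<in> carrier_vec 3" by (simp add: carrier_dim_vec)
  show "\<exists>c :: complex. blk_segment i (unit_vec (n+1) 0) = c \<cdot>\<^sub>v vec_of_list [1, 0, 0]"
    if "1 \<le> i" "i + 1 \<le> n" for i
    by (rule exI, rule blk_segment_first_unit_vec[OF that])
qed

lemma reducible_rep_image_if_blocks_fix_geometric_vec:
  assumes "1 \<le> n"
    and "R \<in> carrier_mat 3 3" "R *\<^sub>v vec_of_list [r^2, r, 1] = vec_of_list [r^2, r, 1]"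
    and "\<And>t. t \<in> {1,2} \<Longrightarrow>
      S t \<in> carrier_mat 3 3 \<and> S t *\<^sub>v vec_of_list [r^2, r, 1] = vec_of_list [r^2, r, 1]"
  shows "reducible (n+1) (rep_image n R S)"
proof (rule reducible_rep_image_if_fixed_vec[OF assms(1) _ _ _ _ assms(2-4)])
  let ?v = "vec (n+1) (\<lambda>b. r ^ (n - b))"
  show "?v \<in> carrier_vec (n+1)" by simp
  have "?v $ n \<noteq> 0\<^sub>v (n+1) $ n" by simp
  then show "?v \<noteq> 0\<^sub>v (n+1)" by metis
  show "vec_of_list [r^2, r, 1] \<in> carrier_vec 3" by (simp add: carrier_dim_vec)
  show "\<exists>c :: complex. blk_segment i ?v = c \<cdot>\<^sub>v vec_of_list [r^2, r, 1]"
    if "1 \<le> i" "i + 1 \<le> n" for i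
    by (rule exI, rule blk_segment_geometric_vec[OF that])
qed

lemma R1_S1_fix_first_unit_vec:
  "R1 r \<in> carrier_mat 3 3" "R1 r *\<^sub>v vec_of_list [1, 0, 0] = vec_of_list [1, 0, 0]"
  "S1 a b c d \<in> carrier_mat 3 3" "S1 a b c d *\<^sub>v vec_of_list [1, 0, 0] = vec_of_list [1, 0, 0]"
  by (simp_all add: R1_def S1_def mat_of_rows_list_3_carrier mat_of_rows_list_3_mult_vec)

lemma R2_S2_fix_last_unit_vec:
  "R2 r \<in> carrier_mat 3 3" "R2 r *\<^sub>v vec_of_list [0, 0, 1] = vec_of_list [0, 0, 1]"
  "S2 a b c d \<in> carrier_mat 3 3" "S2 a b c d *\<^sub>v vec_of_list [0, 0, 1] = vec_of_list [0, 0, 1]"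
  by (simp_all add: R2_def S2_def mat_of_rows_list_3_carrier mat_of_rows_list_3_mult_vec)

lemma R3_S3_fix_geometric_vec:
  assumes "r \<noteq> 0"
  shows "R3 r \<in> carrier_mat 3 3" "R3 r *\<^sub>v vec_of_list [r^2, r, 1] = vec_of_list [r^2, r, 1]"
    "S3 r a b \<in> carrier_mat 3 3" "S3 r a b *\<^sub>v vec_of_list [r^2, r, 1] = vec_of_list [r^2, r, 1]"
  using assms by (simp_all add: R3_def S3_def mat_of_rows_list_3_carrier mat_of_rows_list_3_mult_vec
      power2_eq_square algebra_simps)

lemma R4_S4_fix_first_unit_vec:
  "R4 r \<in> carrier_mat 3 3" "R4 r *\<^sub>v vec_of_list [1, 0, 0] = vec_of_list [1, 0, 0]"
  "S4 r a b \<in> carrier_mat 3 3" "S4 r a b *\<^sub>v vec_of_list [1, 0, 0] = vec_of_list [1, 0, 0]"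
  by (simp_all add: R4_def S4_def mat_of_rows_list_3_carrier mat_of_rows_list_3_mult_vec)

theorem theorem4p2:
  fixes n :: nat
  assumes "n \<ge> 4"
  shows
   "(\<forall>(r6::complex) (s5::nat\<Rightarrow>complex) s6 s8 s9.
       r6 \<noteq> 0 \<and> (\<forall>t\<in>{1,2}. s5 t * s9 t - s6 t * s8 t \<noteq> 0)
       \<longrightarrow> reducible (n+1) (rep_image n (R1 r6) (\<lambda>t. S1 (s5 t) (s6 t) (s8 t) (s9 t))))
  \<and> (\<forall>(r2::complex) (s1::nat\<Rightarrow>complex) s2 s4 s5.
       r2 \<noteq> 0 \<and> (\<forall>t\<in>{1,2}. s1 t * s5 t - s2 t * s4 t \<noteq> 0)
       \<longrightarrow> reducible (n+1) (rep_image n (R2 r2) (\<lambda>t. S2 (s1 t) (s2 t) (s4 t) (s5 t))))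
  \<and> (\<forall>(r6::complex) (s4::nat\<Rightarrow>complex) s5.
       r6 \<noteq> 0 \<and> (\<forall>t\<in>{1,2}. s5 t \<noteq> 0)
       \<longrightarrow> reducible (n+1) (rep_image n (R3 r6) (\<lambda>t. S3 r6 (s4 t) (s5 t))))
  \<and> (\<forall>(r2::complex) (s5::nat\<Rightarrow>complex) s8.
       r2 \<noteq> 0 \<and> (\<forall>t\<in>{1,2}. s5 t \<noteq> 0)
       \<longrightarrow> reducible (n+1) (rep_image n (R4 r2) (\<lambda>t. S4 r2 (s5 t) (s8 t))))"
proof (intro conjI allI impI)
  have n: "1 \<le> n" using assms by simp
  fix r :: complex and s1 s2 s3 s4 :: "nat \<Rightarrow> complex"
  show "reducible (n+1) (rep_image n (R1 r) (\<lambda>t. S1 (s1 t) (s2 t) (s3 t) (s4 t)))"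
    by (rule reducible_rep_image_if_blocks_fix_first_unit_vec[OF n])
      (simp_all add: R1_S1_fix_first_unit_vec)
  show "reducible (n+1) (rep_image n (R2 r) (\<lambda>t. S2 (s1 t) (s2 t) (s3 t) (s4 t)))"
    using reducible_rep_image_if_blocks_fix_geometric_vec[OF n, where r = 0]
    by (simp add: R2_S2_fix_last_unit_vec)
  show "reducible (n+1) (rep_image n (R4 r) (\<lambda>t. S4 r (s1 t) (s2 t)))"
    by (rule reducible_rep_image_if_blocks_fix_first_unit_vec[OF n])
      (simp_all add: R4_S4_fix_first_unit_vec)
  assume "r \<noteq> 0 \<and> (\<forall>t\<in>{1,2}. s2 t \<noteq> 0)"
  then show "reducible (n+1) (rep_image n (R3 r) (\<lambda>t. S3 r (s1 t) (s2 t)))"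
    using reducible_rep_image_if_blocks_fix_geometric_vec[OF n, where r = r]
    by (simp add: R3_S3_fix_geometric_vec)
qed

end
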